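(* Let $D$ be an integral domain, $\star$ a semistar operation on $D$, $T$ an overring of $D$ and $\star'$ a semistar operation on $T$; write $\ell=\ell_{\star,T}$. Then: (1) $\ell$ is a stable semistar operation on $T$; (2) if $T$ is $(\star,\star')$-linked to $D$, then $\ell\le\widetilde{\star'}\le\star'_f$; in particular $T$ is $(\ell,\star')$-linked to $T$; (3) $T$ is $(\star,\ell)$-linked to $D$; in particular $D$ is $(\star,\tilde\star)$-linked to $D$; (4) $\ell$ is of finite type on $T$ and $\widetilde{\ell}=\ell$; (5) $\ell$ is the unique minimal element of the set $\{\ast_f:\ \ast$ a semistar operation on $T$ such that $T$ is $(\star,\ast)$-linked to $D\}$; (6) $T$ is $(\star,\star')$-linked to $D$ if and only if $T$ is $(\ell,\star')$-linked to $T$; (7) $T$ is $(\star,\star')$-linked to $D$ if and only if $\ell\le\star'_f$.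
   Context: Let $D$ be an integral domain with quotient field $K$. $\overline{\mathbf F}(D)$ denotes the set of all nonzero $D$-submodules of $K$ and $\mathbf f(D)$ the set of nonzero finitely generated $D$-submodules of $K$. A semistar operation on $D$ is a map $\star:\overline{\mathbf F}(D)\to\overline{\mathbf F}(D)$, $E\mapsto E^\star$, such that for all $0\ne x\in K$ and $E,F\in\overline{\mathbf F}(D)$: (1) $(xE)^\star=xE^\star$; (2) $E\subseteq F\Rightarrow E^\star\subseteq F^\star$; (3) $E\subseteq E^\star$ and $(E^\star)^\star=E^\star$. $\star_1\le\star_2$ means $E^{\star_1}\subseteq E^{\star_2}$ for all $E$. $\star$ is stable if $(E\cap F)^\star=E^\star\cap F^\star$ for all $E,F$. $\star_f$ is defined by $E^{\star_f}=\bigcup\{F^\star:F\in\mathbf f(D),F\subseteq E\}$; $\star$ is of finite type if $\star=\star_f$. A nonzero ideal $I$ of $D$ is a quasi-$\star$-ideal if $I^\star\cap D=I$; a quasi-$\star$-prime is a prime quasi-$\star$-ideal; a quasi-$\star$-maximal ideal is a maximal element among proper quasi-$\star$-ideals; $\mathcal M(\star_f)$ is the set of quasi-$\star_f$-maximal ideals, and $E^{\tilde\star}=\bigcap\{ED_Q:Q\in\mathcal M(\star_f)\}$ (equal to $K$ if $\mathcal M(\star_f)=\emptyset$). An overring of $D$ is a ring $T$ with $D\subseteq T\subseteq K$; all notions are defined analogously on $T$. $T$ is $(\star,\star')$-linked to $D$ if for every nonzero finitely generated ideal $F\subseteq D$ with $F^\star=D^\star$ one has $(FT)^{\star'}=T^{\star'}$.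 The semistar operation $\ell_{\star,T}$ on $T$ is defined by $E^{\ell_{\star,T}}=\bigcap\{ET_{D\setminus P}: P$ a quasi-$\star_f$-prime ideal of $D\}$ for $E\in\overline{\mathbf F}(T)$ (equal to $K$ if there are none). *)

theory Defs
  imports Main
begin

text \<open>The quotient field K of D is the ambient type 'a (a field); D is a subring of it
  such that every element is a fraction of elements of D.\<close>

definition subring :: "'a::field set \<Rightarrow> bool" where
  "subring R \<longleftrightarrow> 0 \<in> R \<and> 1 \<in> R \<and> (\<forall>a\<in>R. \<forall>b\<in>R. a + b \<in> R \<and> a - b \<in> R \<and> a * b \<in> R)"

definition is_quotient_field_of :: "'a::field set \<Rightarrow> bool" where
  "is_quotient_field_of R \<longleftrightarrow> (\<forall>x. \<exists>a\<in>R. \<exists>b\<in>R. b \<noteq> 0 \<and> x = a / b)"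

definition submod :: "'a::field set \<Rightarrow> 'a set \<Rightarrow> bool" where
  "submod R E \<longleftrightarrow> 0 \<in> E \<and> (\<forall>x\<in>E. \<forall>y\<in>E. x + y \<in> E) \<and> (\<forall>r\<in>R. \<forall>x\<in>E. r * x \<in> E)"

definition Fbar :: "'a::field set \<Rightarrow> 'a set set" where
  "Fbar R = {E. submod R E \<and> E \<noteq> {0}}"

definition mod_gen :: "'a::field set \<Rightarrow> 'a set \<Rightarrow> 'a set" where
  "mod_gen R S = {(\<Sum>s\<in>A. c s * s) | A c. finite A \<and> A \<subseteq> S \<and> (\<forall>s\<in>A. c s \<in> R)}"

definition fgF :: "'a::field set \<Rightarrow> 'a set set" where
  "fgF R = {E. \<exists>S. finite S \<and> E = mod_gen R S \<and> E \<noteq> {0}}"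

definition semistar :: "'a::field set \<Rightarrow> ('a set \<Rightarrow> 'a set) \<Rightarrow> bool" where
  "semistar R st \<longleftrightarrow> (\<forall>E\<in>Fbar R. st E \<in> Fbar R
     \<and> (\<forall>x. x \<noteq> 0 \<longrightarrow> st ((\<lambda>e. x * e) ` E) = (\<lambda>e. x * e) ` st E)
     \<and> (\<forall>F\<in>Fbar R. E \<subseteq> F \<longrightarrow> st E \<subseteq> st F)
     \<and> E \<subseteq> st E \<and> st (st E) = st E)"

definition sle :: "'a::field set \<Rightarrow> ('a set \<Rightarrow> 'a set) \<Rightarrow> ('a set \<Rightarrow> 'a set) \<Rightarrow> bool" where
  "sle R s1 s2 \<longleftrightarrow> (\<forall>E\<in>Fbar R. s1 E \<subseteq> s2 E)"

definition stable :: "'a::field set \<Rightarrow> ('a set \<Rightarrow> 'a set) \<Rightarrow> bool" where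
  "stable R st \<longleftrightarrow> (\<forall>E\<in>Fbar R. \<forall>F\<in>Fbar R. st (E \<inter> F) = st E \<inter> st F)"

definition star_f :: "'a::field set \<Rightarrow> ('a set \<Rightarrow> 'a set) \<Rightarrow> 'a set \<Rightarrow> 'a set" where
  "star_f R st E = \<Union> {st F | F. F \<in> fgF R \<and> F \<subseteq> E}"

definition finite_type :: "'a::field set \<Rightarrow> ('a set \<Rightarrow> 'a set) \<Rightarrow> bool" where
  "finite_type R st \<longleftrightarrow> (\<forall>E\<in>Fbar R. st E = star_f R st E)"

definition ideal_of :: "'a::field set \<Rightarrow> 'a set \<Rightarrow> bool" where
  "ideal_of R I \<longleftrightarrow> I \<subseteq> R \<and> submod R I"

definition quasi_ideal :: "'a::field set \<Rightarrow> ('a set \<Rightarrow> 'a set) \<Rightarrow> 'a set \<Rightarrow> bool" where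
  "quasi_ideal R st I \<longleftrightarrow> ideal_of R I \<and> I \<noteq> {0} \<and> st I \<inter> R = I"

definition quasi_prime :: "'a::field set \<Rightarrow> ('a set \<Rightarrow> 'a set) \<Rightarrow> 'a set \<Rightarrow> bool" where
  "quasi_prime R st P \<longleftrightarrow> quasi_ideal R st P \<and> P \<noteq> R
     \<and> (\<forall>a\<in>R. \<forall>b\<in>R. a * b \<in> P \<longrightarrow> a \<in> P \<or> b \<in> P)"

definition quasi_max :: "'a::field set \<Rightarrow> ('a set \<Rightarrow> 'a set) \<Rightarrow> 'a set \<Rightarrow> bool" where
  "quasi_max R st Q \<longleftrightarrow> quasi_ideal R st Q \<and> Q \<noteq> R
     \<and> (\<forall>I. quasi_ideal R st I \<and> I \<noteq> R \<and> Q \<subseteq> I \<longrightarrow> I = Q)"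

text \<open>E S^{-1}: fractions e/s with e in E and s in S (for E a module over the base ring,
  this is the module E R_S)\<close>
definition loc :: "'a::field set \<Rightarrow> 'a set \<Rightarrow> 'a set" where
  "loc E S = {e / s | e s. e \<in> E \<and> s \<in> S}"

text \<open>star tilde on R (intersection over the empty family is UNIV = K)\<close>
definition tilde :: "'a::field set \<Rightarrow> ('a set \<Rightarrow> 'a set) \<Rightarrow> 'a set \<Rightarrow> 'a set" where
  "tilde R st E = \<Inter> {loc E (R - Q) | Q. quasi_max R (star_f R st) Q}"

text \<open>ell_{star,T}: E |-> intersection of E T_{D\P} over quasi-star_f-primes P of D\<close>
definition ell :: "'a::field set \<Rightarrow> ('a set \<Rightarrow> 'a set) \<Rightarrow> 'a set \<Rightarrow> 'a set" where
  "ell D st E = \<Inter> {loc E (D - P) | P. quasi_prime D (star_f D st) P}"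

definition linked :: "'a::field set \<Rightarrow> 'a set \<Rightarrow> ('a set \<Rightarrow> 'a set) \<Rightarrow> ('a set \<Rightarrow> 'a set) \<Rightarrow> bool" where
  "linked D T s1 s2 \<longleftrightarrow> (\<forall>F. F \<in> fgF D \<and> F \<subseteq> D \<and> s1 F = s1 D \<longrightarrow> s2 (mod_gen T F) = s2 T)"

end

theory Submission
  imports Defs
begin

text \<open>
  Everything reduces to a membership criterion in terms of the conductor
  (E :_D y) = {d \<in> D. d y \<in> E}.  Above every nonzero ideal J with 1 \<notin> J^{star_f},
  Zorn's lemma yields a quasi-star_f-maximal ideal, and such ideals are prime.  Hence
  y \<in> E^ell, i.e. (E :_D y) lies in no quasi-star_f-prime, iff 1 \<in> (E :_D y)^{star_f};
  likewise y \<in> E^{tilde star'} iff 1 \<in> (E :_T y)^{star'_f}.  A finitely generated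
  G \<subseteq> (E :_D y) with 1 \<in> G^star yields the finitely generated yGT \<subseteq> E with y \<in> (yGT)^ell,
  so ell has finite type.  Linkedness says exactly that 1 \<in> F^star forces 1 \<in> (FT)^{star'}
  for finitely generated ideals F of D; this carries the criterion from D to T and gives
  ell \<le> tilde star' \<le> star'_f; conversely, ell \<le> star'_f forces linkedness because
  1 \<in> (FT)^ell for every such F.
\<close>

lemma subringD:
  assumes "subring R"
  shows "0 \<in> R" "1 \<in> R" "a \<in> R \<Longrightarrow> b \<in> R \<Longrightarrow> a + b \<in> R" "a \<in> R \<Longrightarrow> b \<in> R \<Longrightarrow> a * b \<in> R"
  using assms unfolding subring_def by auto

lemma submodD:
  assumes "submod R E"
  shows "0 \<in> E" "x \<in> E \<Longrightarrow> y \<in> E \<Longrightarrow> x + y \<in> E" "r \<in> R \<Longrightarrow> x \<in> E \<Longrightarrow> r * x \<in> E"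
  using assms unfolding submod_def by auto

lemma submod_sum:
  assumes "submod R E" "finite A" "\<And>a. a \<in> A \<Longrightarrow> f a \<in> E"
  shows "sum f A \<in> E"
  using assms(2,3) by (induction A rule: finite_induct) (auto intro: submodD[OF assms(1)])

lemma submod_scale: "submod R E \<Longrightarrow> submod R ((*) x ` E)"
  unfolding submod_def by (auto simp: image_iff) (metis distrib_left)+

lemma subring_submod: "subring R \<Longrightarrow> submod R R"
  unfolding subring_def submod_def by auto

section \<open>Generated submodules\<close>

lemma mod_gen_memI:
  "finite A \<Longrightarrow> A \<subseteq> S \<Longrightarrow> \<forall>s\<in>A. c s \<in> R \<Longrightarrow> (\<Sum>s\<in>A. c s * s) \<in> mod_gen R S"
  unfolding mod_gen_def by blast

lemma mod_gen_memE:
  assumes "x \<in> mod_gen R S"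
  obtains A c where "x = (\<Sum>s\<in>A. c s * s)" "finite A" "A \<subseteq> S" "\<forall>s\<in>A. c s \<in> R"
  using assms unfolding mod_gen_def by blast

lemma mod_gen_least:
  assumes E: "submod R E" and S: "S \<subseteq> E"
  shows "mod_gen R S \<subseteq> E"
proof
  fix x assume "x \<in> mod_gen R S"
  then obtain A c where x: "x = (\<Sum>s\<in>A. c s * s)" "finite A" "A \<subseteq> S" "\<forall>s\<in>A. c s \<in> R"
    by (rule mod_gen_memE)
  show "x \<in> E"
    unfolding x(1) using x(2-4) S by (intro submod_sum[OF E]) (auto intro: submodD(3)[OF E])
qed

lemma mod_gen_base: "subring R \<Longrightarrow> S \<subseteq> mod_gen R S"
  using mod_gen_memI[of "{s}" S "\<lambda>_. 1" R for s] by (auto dest: subringD(2))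

lemma mod_gen_mono: "S \<subseteq> S' \<Longrightarrow> mod_gen R S \<subseteq> mod_gen R S'"
  unfolding mod_gen_def by blast

lemma mod_gen_mono_ring: "R \<subseteq> R' \<Longrightarrow> mod_gen R S \<subseteq> mod_gen R' S"
  unfolding mod_gen_def by blast

lemma mod_gen_empty: "mod_gen R {} = {0}"
  unfolding mod_gen_def by auto

lemma submod_mod_gen:
  assumes R: "subring R"
  shows "submod R (mod_gen R S)"
  unfolding submod_def
proof (intro conjI ballI)
  show "0 \<in> mod_gen R S"
    using mod_gen_memI[of "{}" S] by simp
next
  fix x y assume "x \<in> mod_gen R S" "y \<in> mod_gen R S"
  obtain A c where x: "x = (\<Sum>s\<in>A. c s * s)" "finite A" "A \<subseteq> S" "\<forall>s\<in>A. c s \<in> R"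
    using \<open>x \<in> mod_gen R S\<close> by (rule mod_gen_memE)
  obtain B d where y: "y = (\<Sum>s\<in>B. d s * s)" "finite B" "B \<subseteq> S" "\<forall>s\<in>B. d s \<in> R"
    using \<open>y \<in> mod_gen R S\<close> by (rule mod_gen_memE)
  define e where "e s = (if s \<in> A then c s else 0) + (if s \<in> B then d s else 0)" for s
  have "x = (\<Sum>s\<in>A \<union> B. if s \<in> A then c s * s else 0)"
    using x(1,2) y(2) sum.inter_restrict[of "A \<union> B" "\<lambda>s. c s * s" A] by (simp add: Int_absorb1)
  moreover have "y = (\<Sum>s\<in>A \<union> B. if s \<in> B then d s * s else 0)"
    using y(1,2) x(2) sum.inter_restrict[of "A \<union> B" "\<lambda>s. d s * s" B] by (simp add: Int_absorb1)
  moreover have "e s * s = (if s \<in> A then c s * s else 0) + (if s \<in> B then d s * s else 0)" for s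
    unfolding e_def by (simp add: distrib_right)
  ultimately have sum: "x + y = (\<Sum>s\<in>A \<union> B. e s * s)"
    by (simp add: sum.distrib)
  have "\<forall>s\<in>A \<union> B. e s \<in> R"
    using x(4) y(4) subringD(1,3)[OF R] unfolding e_def by simp
  then show "x + y \<in> mod_gen R S"
    unfolding sum using x(2,3) y(2,3) by (intro mod_gen_memI) auto
next
  fix r x assume r: "r \<in> R" and "x \<in> mod_gen R S"
  then obtain A c where x: "x = (\<Sum>s\<in>A. c s * s)" "finite A" "A \<subseteq> S" "\<forall>s\<in>A. c s \<in> R"
    by (elim mod_gen_memE)
  have "r * x = (\<Sum>s\<in>A. (r * c s) * s)"
    using x(1) by (simp add: sum_distrib_left mult.assoc)
  then show "r * x \<in> mod_gen R S"
    using x(2-4) r subringD(4)[OF R] by (simp add: mod_gen_memI)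
qed

lemma mod_gen_eq_self: "subring R \<Longrightarrow> submod R E \<Longrightarrow> mod_gen R E = E"
  using mod_gen_least[of R E E] mod_gen_base[of R E] by blast

lemma ideal_of_mod_gen: "subring R \<Longrightarrow> S \<subseteq> R \<Longrightarrow> ideal_of R (mod_gen R S)"
  unfolding ideal_of_def using mod_gen_least[OF subring_submod] submod_mod_gen by blast

lemma mod_gen_scale:
  assumes R: "subring R" and x: "x \<noteq> 0"
  shows "mod_gen R ((*) x ` S) = (*) x ` mod_gen R S"
proof
  show "mod_gen R ((*) x ` S) \<subseteq> (*) x ` mod_gen R S"
    by (rule mod_gen_least[OF submod_scale[OF submod_mod_gen[OF R]]])
      (use mod_gen_base[OF R] in blast)
  have "mod_gen R S \<subseteq> (*) (1 / x) ` mod_gen R ((*) x ` S)"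
  proof (rule mod_gen_least[OF submod_scale[OF submod_mod_gen[OF R]]], rule subsetI)
    fix s assume "s \<in> S"
    then have "x * s \<in> mod_gen R ((*) x ` S)"
      using mod_gen_base[OF R] by blast
    moreover have "s = (1 / x) * (x * s)" using x by simp
    ultimately show "s \<in> (*) (1 / x) ` mod_gen R ((*) x ` S)" by blast
  qed
  then show "(*) x ` mod_gen R S \<subseteq> mod_gen R ((*) x ` S)"
    using x by (force simp: image_image)
qed

lemma mod_gen_mod_gen:
  assumes "subring D" "subring T" "D \<subseteq> T"
  shows "mod_gen T (mod_gen D S) = mod_gen T S"
proof
  show "mod_gen T (mod_gen D S) \<subseteq> mod_gen T S"
    by (rule mod_gen_least[OF submod_mod_gen[OF assms(2)] mod_gen_mono_ring[OF assms(3)]])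
  show "mod_gen T S \<subseteq> mod_gen T (mod_gen D S)"
    by (rule mod_gen_mono[OF mod_gen_base[OF assms(1)]])
qed

lemma Fbar_submod: "E \<in> Fbar R \<Longrightarrow> submod R E"
  unfolding Fbar_def by blast

lemma Fbar_nonzero:
  assumes "E \<in> Fbar R"
  obtains e where "e \<in> E" "e \<noteq> 0"
  using assms unfolding Fbar_def submod_def by blast

lemma subring_Fbar: "subring R \<Longrightarrow> R \<in> Fbar R"
  unfolding Fbar_def subring_def submod_def by auto

lemma fgF_memE:
  assumes "F \<in> fgF R"
  obtains S where "finite S" "F = mod_gen R S" "F \<noteq> {0}"
  using assms unfolding fgF_def by blast

lemma fgF_I: "finite S \<Longrightarrow> mod_gen R S \<noteq> {0} \<Longrightarrow> mod_gen R S \<in> fgF R"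
  unfolding fgF_def by blast

lemma fgF_Fbar: "subring R \<Longrightarrow> F \<in> fgF R \<Longrightarrow> F \<in> Fbar R"
  unfolding fgF_def Fbar_def using submod_mod_gen by blast

lemma fgF_scale:
  assumes R: "subring R" and x: "x \<noteq> 0" and F: "F \<in> fgF R"
  shows "(*) x ` F \<in> fgF R"
proof -
  obtain S where S: "finite S" "F = mod_gen R S" "F \<noteq> {0}"
    using F by (rule fgF_memE)
  obtain f where "f \<in> F" "f \<noteq> 0"
    using fgF_Fbar[OF R F] by (rule Fbar_nonzero)
  then have "x * f \<in> (*) x ` F" "x * f \<noteq> 0"
    using x by auto
  then have "(*) x ` F \<noteq> {0}"
    by blast
  then show ?thesis
    unfolding S(2) mod_gen_scale[OF R x, symmetric] using S(1) by (intro fgF_I) auto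
qed

lemma fgF_extend:
  assumes D: "subring D" and T: "subring T" and DT: "D \<subseteq> T" and F: "F \<in> fgF D"
  shows "mod_gen T F \<in> fgF T"
proof -
  obtain S where S: "finite S" "F = mod_gen D S" "F \<noteq> {0}"
    using F by (rule fgF_memE)
  have eq: "mod_gen T F = mod_gen T S"
    unfolding S(2) by (rule mod_gen_mod_gen[OF D T DT])
  have "F \<subseteq> mod_gen T F"
    by (rule mod_gen_base[OF T])
  then have "mod_gen T S \<noteq> {0}"
    using S(2,3) submodD(1)[OF submod_mod_gen[OF D]] eq by blast
  then show ?thesis
    unfolding eq by (rule fgF_I[OF S(1)])
qed

lemma fgF_upper_bound:
  assumes R: "subring R" and E: "submod R E"
    and \<F>: "finite \<F>" "\<F> \<noteq> {}" "\<F> \<subseteq> fgF R" "\<Union>\<F> \<subseteq> E"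
  obtains F where "F \<in> fgF R" "\<Union>\<F> \<subseteq> F" "F \<subseteq> E"
proof -
  have "\<forall>G\<in>\<F>. \<exists>S. finite S \<and> G = mod_gen R S"
    using \<F>(3) unfolding fgF_def by blast
  then obtain gen where gen: "\<And>G. G \<in> \<F> \<Longrightarrow> finite (gen G) \<and> G = mod_gen R (gen G)"
    by metis
  define F where "F = mod_gen R (\<Union>G\<in>\<F>. gen G)"
  have sub: "\<Union>\<F> \<subseteq> F"
    unfolding F_def using gen mod_gen_mono[of "gen _" "\<Union>G\<in>\<F>. gen G" R] by blast
  have "F \<subseteq> E"
    unfolding F_def using gen mod_gen_base[OF R] \<F>(4) by (intro mod_gen_least[OF E]) blast
  moreover have "F \<in> fgF R"
  proof -
    obtain G where G: "G \<in> \<F>" using \<F>(2) by blast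
    obtain g where "g \<in> G" "g \<noteq> 0"
      using fgF_Fbar[OF R] \<F>(3) G by (meson Fbar_nonzero subsetD)
    then have "F \<noteq> {0}" using sub G by blast
    then show ?thesis
      unfolding F_def using \<F>(1) gen by (intro fgF_I) auto
  qed
  ultimately show thesis using sub that by blast
qed

section \<open>The finite-type operation \<open>star_f\<close>\<close>

lemma semistarD:
  assumes "semistar R st" "E \<in> Fbar R"
  shows "st E \<in> Fbar R" "x \<noteq> 0 \<Longrightarrow> st ((*) x ` E) = (*) x ` st E"
    "F \<in> Fbar R \<Longrightarrow> E \<subseteq> F \<Longrightarrow> st E \<subseteq> st F" "E \<subseteq> st E" "st (st E) = st E"
  using assms unfolding semistar_def by auto

lemma mem_star_f_iff: "x \<in> star_f R st E \<longleftrightarrow> (\<exists>F\<in>fgF R. F \<subseteq> E \<and> x \<in> st F)"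
  unfolding star_f_def by blast

lemma star_f_mono: "E \<subseteq> E' \<Longrightarrow> star_f R st E \<subseteq> star_f R st E'"
  unfolding star_f_def by blast

lemma star_f_fgF: "F \<in> fgF R \<Longrightarrow> F \<subseteq> E \<Longrightarrow> st F \<subseteq> star_f R st E"
  unfolding star_f_def by blast

lemma star_f_le:
  assumes R: "subring R" and st: "semistar R st" and E: "E \<in> Fbar R"
  shows "star_f R st E \<subseteq> st E"
  unfolding star_f_def using semistarD(3)[OF st fgF_Fbar[OF R] E] by blast

context
  fixes R :: "'a::field set" and st :: "'a set \<Rightarrow> 'a set"
  assumes R: "subring R" and st: "semistar R st"
begin

lemma star_f_incl:
  assumes E: "E \<in> Fbar R"
  shows "E \<subseteq> star_f R st E"
proof
  fix x assume x: "x \<in> E"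
  obtain e where e: "e \<in> E" "e \<noteq> 0"
    using E by (rule Fbar_nonzero)
  have "e \<in> mod_gen R {e, x}" "x \<in> mod_gen R {e, x}"
    using mod_gen_base[OF R, of "{e, x}"] by auto
  then have F: "mod_gen R {e, x} \<in> fgF R"
    using e(2) by (intro fgF_I) auto
  moreover have "mod_gen R {e, x} \<subseteq> E"
    using e x by (intro mod_gen_least[OF Fbar_submod[OF E]]) auto
  moreover have "x \<in> st (mod_gen R {e, x})"
    using semistarD(4)[OF st fgF_Fbar[OF R F]] \<open>x \<in> mod_gen R {e, x}\<close> by blast
  ultimately show "x \<in> star_f R st E"
    unfolding mem_star_f_iff by blast
qed

lemma submod_star_f:
  assumes E: "E \<in> Fbar R"
  shows "submod R (star_f R st E)"
  unfolding submod_def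
proof (intro conjI ballI)
  show "0 \<in> star_f R st E"
    using star_f_incl[OF E] submodD(1)[OF Fbar_submod[OF E]] by blast
next
  fix x y assume "x \<in> star_f R st E" "y \<in> star_f R st E"
  then obtain F1 F2 where F: "F1 \<in> fgF R" "F1 \<subseteq> E" "x \<in> st F1" "F2 \<in> fgF R" "F2 \<subseteq> E" "y \<in> st F2"
    unfolding mem_star_f_iff by blast
  obtain F where F': "F \<in> fgF R" "\<Union>{F1, F2} \<subseteq> F" "F \<subseteq> E"
    by (rule fgF_upper_bound[OF R Fbar_submod[OF E], of "{F1, F2}"]) (use F in auto)
  have "st F1 \<subseteq> st F" "st F2 \<subseteq> st F"
    using F F' semistarD(3)[OF st fgF_Fbar[OF R] fgF_Fbar[OF R F'(1)]] by auto
  then have "x + y \<in> st F"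
    using F submodD(2)[OF Fbar_submod[OF semistarD(1)[OF st fgF_Fbar[OF R F'(1)]]]] by blast
  then show "x + y \<in> star_f R st E"
    unfolding mem_star_f_iff using F' by blast
next
  fix r x assume r: "r \<in> R" and "x \<in> star_f R st E"
  then obtain F where F: "F \<in> fgF R" "F \<subseteq> E" "x \<in> st F"
    unfolding mem_star_f_iff by blast
  then have "r * x \<in> st F"
    using submodD(3)[OF Fbar_submod[OF semistarD(1)[OF st fgF_Fbar[OF R F(1)]]] r] by blast
  then show "r * x \<in> star_f R st E"
    unfolding mem_star_f_iff using F by blast
qed

lemma star_f_idem:
  assumes E: "submod R E"
  shows "star_f R st (star_f R st E) \<subseteq> star_f R st E"
proof
  fix x assume "x \<in> star_f R st (star_f R st E)"
  then obtain G where G: "G \<in> fgF R" "G \<subseteq> star_f R st E" "x \<in> st G"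
    unfolding mem_star_f_iff by blast
  obtain S where S: "finite S" "G = mod_gen R S" "G \<noteq> {0}"
    using G(1) by (rule fgF_memE)
  have "S \<subseteq> star_f R st E"
    using G(2) S(2) mod_gen_base[OF R, of S] by blast
  then have "\<forall>s\<in>S. \<exists>F. F \<in> fgF R \<and> F \<subseteq> E \<and> s \<in> st F"
    by (simp add: subset_iff mem_star_f_iff Bex_def)
  then obtain H where H: "\<forall>s\<in>S. H s \<in> fgF R \<and> H s \<subseteq> E \<and> s \<in> st (H s)"
    by (elim bchoice[THEN exE])
  have "S \<noteq> {}"
    using S(2,3) mod_gen_empty by auto
  obtain F where F: "F \<in> fgF R" "\<Union>(H ` S) \<subseteq> F" "F \<subseteq> E"
    by (rule fgF_upper_bound[OF R E, of "H ` S"]) (use S(1) H \<open>S \<noteq> {}\<close> in auto)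
  have stF: "st F \<in> Fbar R"
    using semistarD(1)[OF st fgF_Fbar[OF R F(1)]] .
  have "S \<subseteq> st F"
  proof
    fix s assume s: "s \<in> S"
    have "st (H s) \<subseteq> st F"
      using H s F(2) by (intro semistarD(3)[OF st fgF_Fbar[OF R] fgF_Fbar[OF R F(1)]]) auto
    then show "s \<in> st F"
      using H s by blast
  qed
  then have "G \<subseteq> st F"
    unfolding S(2) by (rule mod_gen_least[OF Fbar_submod[OF stF]])
  then have "st G \<subseteq> st F"
    using semistarD(3)[OF st fgF_Fbar[OF R G(1)] stF] semistarD(5)[OF st fgF_Fbar[OF R F(1)]] by simp
  then show "x \<in> star_f R st E"
    unfolding mem_star_f_iff using F G(3) by blast
qed

lemma star_f_scale:
  assumes x: "x \<noteq> 0"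
  shows "(*) x ` star_f R st E \<subseteq> star_f R st ((*) x ` E)"
proof
  fix y assume "y \<in> (*) x ` star_f R st E"
  then obtain z where z: "z \<in> star_f R st E" and y: "y = x * z"
    by blast
  then obtain F where F: "F \<in> fgF R" "F \<subseteq> E" "z \<in> st F"
    unfolding mem_star_f_iff by blast
  have "y \<in> (*) x ` st F"
    using F(3) y by blast
  then have "y \<in> st ((*) x ` F)"
    using semistarD(2)[OF st fgF_Fbar[OF R F(1)] x] by simp
  then show "y \<in> star_f R st ((*) x ` E)"
    unfolding mem_star_f_iff using fgF_scale[OF R x F(1)] F(2) by blast
qed

end

lemma star_f_Union_chain:
  assumes R: "subring R" and C: "C \<noteq> {}" "subset.chain \<A> C"
    and sub: "\<And>I. I \<in> C \<Longrightarrow> submod R I"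
  shows "star_f R st (\<Union>C) = (\<Union>I\<in>C. star_f R st I)"
proof
  show "(\<Union>I\<in>C. star_f R st I) \<subseteq> star_f R st (\<Union>C)"
    using star_f_mono[of _ "\<Union>C"] by blast
  show "star_f R st (\<Union>C) \<subseteq> (\<Union>I\<in>C. star_f R st I)"
  proof
    fix x assume "x \<in> star_f R st (\<Union>C)"
    then obtain F where F: "F \<in> fgF R" "F \<subseteq> \<Union>C" "x \<in> st F"
      unfolding mem_star_f_iff by blast
    obtain S where S: "finite S" "F = mod_gen R S" "F \<noteq> {0}"
      using F(1) by (rule fgF_memE)
    have "S \<subseteq> \<Union>C"
      using F(2) S(2) mod_gen_base[OF R] by blast
    then obtain I where I: "I \<in> C" "S \<subseteq> I"
      using finite_subset_Union_chain[OF S(1) _ C(1,2)] by blast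
    then have "F \<subseteq> I"
      unfolding S(2) using sub by (intro mod_gen_least) auto
    then show "x \<in> (\<Union>I\<in>C. star_f R st I)"
      using I(1) star_f_fgF[OF F(1)] F(3) by blast
  qed
qed

section \<open>Quasi-\<open>star_f\<close>-maximal ideals\<close>

lemma ideal_of_one_eq: "ideal_of R I \<Longrightarrow> 1 \<in> I \<Longrightarrow> I = R"
  unfolding ideal_of_def submod_def by (metis mult.right_neutral subsetI subset_antisym)

lemma quasi_ideal_one_notin_star_f:
  assumes R: "subring R" and P: "quasi_ideal R (star_f R st) P" "P \<noteq> R"
  shows "1 \<notin> star_f R st P"
  using P ideal_of_one_eq subringD(2)[OF R] unfolding quasi_ideal_def by blast

lemma ideal_of_Union_chain:
  assumes C: "C \<noteq> {}" "subset.chain \<A> C" and ideals: "\<And>I. I \<in> C \<Longrightarrow> ideal_of R I"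
  shows "ideal_of R (\<Union>C)"
  unfolding ideal_of_def submod_def
proof (intro conjI ballI)
  show "\<Union>C \<subseteq> R"
    using ideals unfolding ideal_of_def by blast
  show "0 \<in> \<Union>C"
    using C(1) ideals unfolding ideal_of_def submod_def by blast
next
  fix x y assume "x \<in> \<Union>C" "y \<in> \<Union>C"
  then obtain I where "I \<in> C" "x \<in> I" "y \<in> I"
    using C(2) unfolding subset.chain_def by blast
  then show "x + y \<in> \<Union>C"
    using ideals[of I] unfolding ideal_of_def submod_def by blast
next
  fix r x assume "r \<in> R" "x \<in> \<Union>C"
  then show "r * x \<in> \<Union>C"
    using ideals unfolding ideal_of_def submod_def by blast
qed

locale star_f_max_ideal =
  fixes R :: "'a::field set" and st :: "'a set \<Rightarrow> 'a set" and M :: "'a set"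
  assumes R: "subring R" and st: "semistar R st"
    and M: "ideal_of R M" "M \<noteq> {0}" "1 \<notin> star_f R st M"
    and maximal: "\<And>I. ideal_of R I \<Longrightarrow> M \<subseteq> I \<Longrightarrow> 1 \<notin> star_f R st I \<Longrightarrow> I = M"
begin

lemma Fbar: "M \<in> Fbar R"
  using M(1,2) unfolding ideal_of_def Fbar_def by blast

text \<open>Closedness (c = 1, I = M + dR) and primality (c = b, I = M + aR) both reduce to this.\<close>

lemma absorb:
  assumes I: "ideal_of R I" "M \<subseteq> I" "I \<noteq> M" and c: "c \<noteq> 0" "(*) c ` I \<subseteq> star_f R st M"
  shows "c \<in> star_f R st M"
proof -
  have "1 \<in> star_f R st I"
    using maximal I by blast
  then have "c \<in> (*) c ` star_f R st I"
    by (metis image_eqI mult.right_neutral)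
  also have "\<dots> \<subseteq> star_f R st ((*) c ` I)"
    by (rule star_f_scale[OF R st c(1)])
  also have "\<dots> \<subseteq> star_f R st (star_f R st M)"
    by (rule star_f_mono[OF c(2)])
  also have "\<dots> \<subseteq> star_f R st M"
    by (rule star_f_idem[OF R st Fbar_submod[OF Fbar]])
  finally show ?thesis .
qed

lemma closed:
  assumes d: "d \<in> R" "d \<in> star_f R st M"
  shows "d \<in> M"
proof (rule ccontr)
  assume "d \<notin> M"
  let ?I = "mod_gen R (insert d M)"
  have I: "ideal_of R ?I"
    using ideal_of_mod_gen[OF R] d(1) M(1) unfolding ideal_of_def by blast
  have dM: "insert d M \<subseteq> ?I"
    by (rule mod_gen_base[OF R])
  have "?I \<subseteq> star_f R st M"
    using star_f_incl[OF R st Fbar] d(2) by (intro mod_gen_least[OF submod_star_f[OF R st Fbar]]) blast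
  then have "1 \<in> star_f R st M"
    using absorb[OF I, of 1] dM \<open>d \<notin> M\<close> by auto
  then show False
    using M(3) by blast
qed

lemma quasi_ideal: "quasi_ideal R (star_f R st) M"
  unfolding quasi_ideal_def using M(1,2) closed star_f_incl[OF R st Fbar]
  unfolding ideal_of_def by blast

lemma proper: "M \<noteq> R"
  using M(3) star_f_incl[OF R st Fbar] subringD(2)[OF R] by blast

lemma prime: "a \<in> R \<Longrightarrow> b \<in> R \<Longrightarrow> a * b \<in> M \<Longrightarrow> a \<notin> M \<Longrightarrow> b \<in> M"
proof (cases "b = 0")
  case True
  then show ?thesis
    using M(1) unfolding ideal_of_def submod_def by blast
next
  case False
  assume ab: "a \<in> R" "b \<in> R" "a * b \<in> M" and "a \<notin> M"
  let ?I = "mod_gen R (insert a M)"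
  have I: "ideal_of R ?I"
    using ideal_of_mod_gen[OF R] ab(1) M(1) unfolding ideal_of_def by blast
  have aM: "insert a M \<subseteq> ?I"
    by (rule mod_gen_base[OF R])
  have "(*) b ` insert a M \<subseteq> M"
    using ab M(1) unfolding ideal_of_def submod_def by (auto simp: mult.commute)
  then have "mod_gen R ((*) b ` insert a M) \<subseteq> M"
    using M(1) unfolding ideal_of_def by (intro mod_gen_least) auto
  then have "(*) b ` ?I \<subseteq> star_f R st M"
    using mod_gen_scale[OF R False] star_f_incl[OF R st Fbar] by blast
  then have "b \<in> star_f R st M"
    using absorb[OF I _ _ False] aM \<open>a \<notin> M\<close> by blast
  then show ?thesis
    using closed ab(2) by blast
qed

lemma quasi_prime: "quasi_prime R (star_f R st) M"
  unfolding quasi_prime_def using quasi_ideal proper prime by blast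

lemma quasi_max: "quasi_max R (star_f R st) M"
  unfolding quasi_max_def
proof (intro conjI quasi_ideal proper allI impI)
  fix I assume I: "quasi_ideal R (star_f R st) I \<and> I \<noteq> R \<and> M \<subseteq> I"
  then have "1 \<notin> star_f R st I"
    using quasi_ideal_one_notin_star_f[OF R] by blast
  then show "I = M"
    using maximal I unfolding quasi_ideal_def by blast
qed

end

lemma exists_quasi_max_superset:
  assumes R: "subring R" and st: "semistar R st"
    and J: "ideal_of R J" "J \<noteq> {0}" and one: "1 \<notin> star_f R st J"
  obtains M where "quasi_max R (star_f R st) M" "quasi_prime R (star_f R st) M" "J \<subseteq> M"
proof -
  define \<A> where "\<A> = {I. ideal_of R I \<and> J \<subseteq> I \<and> 1 \<notin> star_f R st I}"
  have "\<exists>M\<in>\<A>. \<forall>X\<in>\<A>. M \<subseteq> X \<longrightarrow> X = M"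
  proof (rule subset_Zorn_nonempty)
    show "\<A> \<noteq> {}"
      using J one unfolding \<A>_def by blast
    fix C assume C: "C \<noteq> {}" "subset.chain \<A> C"
    then have CA: "\<And>I. I \<in> C \<Longrightarrow> ideal_of R I \<and> J \<subseteq> I \<and> 1 \<notin> star_f R st I"
      unfolding subset.chain_def \<A>_def by blast
    have "ideal_of R (\<Union>C)"
      using ideal_of_Union_chain[OF C] CA by blast
    moreover have "1 \<notin> star_f R st (\<Union>C)"
      using star_f_Union_chain[OF R C] CA unfolding ideal_of_def by auto
    moreover have "J \<subseteq> \<Union>C"
      using C(1) CA by blast
    ultimately show "\<Union>C \<in> \<A>"
      unfolding \<A>_def by blast
  qed
  then obtain M where "M \<in> \<A>" and max: "\<forall>X\<in>\<A>. M \<subseteq> X \<longrightarrow> X = M"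
    by blast
  then have M: "ideal_of R M" "J \<subseteq> M" "1 \<notin> star_f R st M"
    unfolding \<A>_def by auto
  have "0 \<in> J"
    using J(1) unfolding ideal_of_def submod_def by blast
  then have "M \<noteq> {0}"
    using J(2) M(2) by blast
  moreover have "I = M" if "ideal_of R I" "M \<subseteq> I" "1 \<notin> star_f R st I" for I
    using max that M(2) unfolding \<A>_def by blast
  ultimately have "star_f_max_ideal R st M"
    using R st M(1,3) by unfold_locales
  then show thesis
    using that star_f_max_ideal.quasi_max star_f_max_ideal.quasi_prime M(2) by blast
qed

section \<open>The conductor criterion\<close>

definition colon :: "'a::field set \<Rightarrow> 'a set \<Rightarrow> 'a \<Rightarrow> 'a set" where
  "colon R E y = {r \<in> R. r * y \<in> E}"

lemma ideal_of_colon: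
  assumes R: "subring R" and RT: "R \<subseteq> T" and E: "submod T E"
  shows "ideal_of R (colon R E y)"
  unfolding ideal_of_def submod_def colon_def
proof (intro conjI ballI)
  show "0 \<in> {r \<in> R. r * y \<in> E}"
    using subringD(1)[OF R] submodD(1)[OF E] by simp
next
  fix a b assume "a \<in> {r \<in> R. r * y \<in> E}" "b \<in> {r \<in> R. r * y \<in> E}"
  then show "a + b \<in> {r \<in> R. r * y \<in> E}"
    using subringD(3)[OF R] submodD(2)[OF E] by (simp add: distrib_right)
next
  fix r a assume "r \<in> R" "a \<in> {r \<in> R. r * y \<in> E}"
  then show "r * a \<in> {r \<in> R. r * y \<in> E}"
    using subringD(4)[OF R] submodD(3)[OF E] RT by (auto simp: mult.assoc)
qed auto

lemma colon_ne_zero: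
  assumes D: "subring D" and Q: "is_quotient_field_of D" and DR: "D \<subseteq> R" and DT: "D \<subseteq> T"
    and E: "E \<in> Fbar T"
  shows "colon R E y \<noteq> {0}"
proof -
  obtain e where e: "e \<in> E" "e \<noteq> 0"
    using E by (rule Fbar_nonzero)
  have "\<exists>a\<in>D. a \<noteq> 0 \<and> a * y \<in> E"
  proof (cases "y = 0")
    case True
    then show ?thesis
      using subringD(2)[OF D] submodD(1)[OF Fbar_submod[OF E]] by (intro bexI[of _ 1]) auto
  next
    case False
    obtain a b where ab: "a \<in> D" "b \<in> D" "b \<noteq> 0" "e / y = a / b"
      using Q unfolding is_quotient_field_of_def by blast
    then have "a * y = b * e"
      using False by (simp add: field_simps)
    moreover have "b * e \<in> E"
      using submodD(3)[OF Fbar_submod[OF E]] ab(2) DT e(1) by blast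
    ultimately show ?thesis
      using ab(1,3) e(2) False by (metis mult_eq_0_iff)
  qed
  then show ?thesis
    unfolding colon_def using DR by blast
qed

lemma mem_loc_iff_colon:
  assumes "0 \<in> P"
  shows "y \<in> loc E (R - P) \<longleftrightarrow> \<not> colon R E y \<subseteq> P"
proof
  assume "y \<in> loc E (R - P)"
  then obtain e s where "y = e / s" "e \<in> E" "s \<in> R - P"
    unfolding loc_def by blast
  moreover have "s \<noteq> 0"
    using assms \<open>s \<in> R - P\<close> by blast
  ultimately show "\<not> colon R E y \<subseteq> P"
    unfolding colon_def by auto
next
  assume "\<not> colon R E y \<subseteq> P"
  then obtain s where "s \<in> R - P" "s * y \<in> E"
    unfolding colon_def by blast
  moreover have "s \<noteq> 0"
    using assms \<open>s \<in> R - P\<close> by blast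
  ultimately have "y = (s * y) / s" "s * y \<in> E" "s \<in> R - P"
    by simp_all
  then show "y \<in> loc E (R - P)"
    unfolding loc_def by blast
qed

lemma mem_Inter_loc_iff:
  assumes "\<And>P. \<P> P \<Longrightarrow> 0 \<in> P"
  shows "y \<in> \<Inter>{loc E (R - P) | P. \<P> P} \<longleftrightarrow> (\<forall>P. \<P> P \<longrightarrow> \<not> colon R E y \<subseteq> P)"
proof -
  have "y \<in> \<Inter>{loc E (R - P) | P. \<P> P} \<longleftrightarrow> (\<forall>P. \<P> P \<longrightarrow> y \<in> loc E (R - P))"
    by blast
  then show ?thesis
    using mem_loc_iff_colon[OF assms] by simp
qed

lemma mem_ell_iff: "y \<in> ell D st E \<longleftrightarrow> (\<forall>P. quasi_prime D (star_f D st) P \<longrightarrow> \<not> colon D E y \<subseteq> P)"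
  unfolding ell_def
  by (rule mem_Inter_loc_iff) (simp add: quasi_prime_def quasi_ideal_def ideal_of_def submod_def)

lemma mem_tilde_iff: "y \<in> tilde R st E \<longleftrightarrow> (\<forall>Q. quasi_max R (star_f R st) Q \<longrightarrow> \<not> colon R E y \<subseteq> Q)"
  unfolding tilde_def
  by (rule mem_Inter_loc_iff) (simp add: quasi_max_def quasi_ideal_def ideal_of_def submod_def)

lemma one_mem_star_f_iff_not_subset:
  assumes R: "subring R" and st: "semistar R st" and J: "ideal_of R J" "J \<noteq> {0}"
    and proper: "\<And>P. \<P> P \<Longrightarrow> quasi_ideal R (star_f R st) P \<and> P \<noteq> R"
    and maximal: "\<And>M. quasi_max R (star_f R st) M \<Longrightarrow> quasi_prime R (star_f R st) M \<Longrightarrow> \<P> M"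
  shows "1 \<in> star_f R st J \<longleftrightarrow> (\<forall>P. \<P> P \<longrightarrow> \<not> J \<subseteq> P)"
proof
  assume one: "1 \<in> star_f R st J"
  show "\<forall>P. \<P> P \<longrightarrow> \<not> J \<subseteq> P"
  proof (intro allI impI notI)
    fix P assume P: "\<P> P" "J \<subseteq> P"
    then have "1 \<in> star_f R st P"
      using one star_f_mono by blast
    then show False
      using quasi_ideal_one_notin_star_f[OF R] proper[OF P(1)] by blast
  qed
next
  assume avoid: "\<forall>P. \<P> P \<longrightarrow> \<not> J \<subseteq> P"
  show "1 \<in> star_f R st J"
  proof (rule ccontr)
    assume "1 \<notin> star_f R st J"
    then obtain M where "quasi_max R (star_f R st) M" "quasi_prime R (star_f R st) M" "J \<subseteq> M"
      by (rule exists_quasi_max_superset[OF R st J])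
    then show False
      using avoid maximal by blast
  qed
qed

lemma mem_ell_iff_colon:
  assumes D: "subring D" and Q: "is_quotient_field_of D" and DT: "D \<subseteq> T"
    and st: "semistar D st" and E: "E \<in> Fbar T"
  shows "y \<in> ell D st E \<longleftrightarrow> 1 \<in> star_f D st (colon D E y)"
proof -
  have "1 \<in> star_f D st (colon D E y) \<longleftrightarrow>
      (\<forall>P. quasi_prime D (star_f D st) P \<longrightarrow> \<not> colon D E y \<subseteq> P)"
    by (rule one_mem_star_f_iff_not_subset[OF D st ideal_of_colon[OF D DT Fbar_submod[OF E]]
          colon_ne_zero[OF D Q order.refl DT E]])
      (simp_all add: quasi_prime_def)
  then show ?thesis
    unfolding mem_ell_iff by simp
qed

lemma mem_tilde_iff_colon:
  assumes D: "subring D" and Q: "is_quotient_field_of D" and R: "subring R" and DR: "D \<subseteq> R"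
    and st: "semistar R st" and E: "E \<in> Fbar R"
  shows "y \<in> tilde R st E \<longleftrightarrow> 1 \<in> star_f R st (colon R E y)"
proof -
  have "1 \<in> star_f R st (colon R E y) \<longleftrightarrow>
      (\<forall>Q. quasi_max R (star_f R st) Q \<longrightarrow> \<not> colon R E y \<subseteq> Q)"
    by (rule one_mem_star_f_iff_not_subset[OF R st ideal_of_colon[OF R order.refl Fbar_submod[OF E]]
          colon_ne_zero[OF D Q DR DR E]])
      (simp_all add: quasi_max_def)
  then show ?thesis
    unfolding mem_tilde_iff by simp
qed

lemma tilde_eq_ell:
  assumes "subring D" "is_quotient_field_of D" "semistar D st" "E \<in> Fbar D"
  shows "tilde D st E = ell D st E"
  by (rule set_eqI)
    (simp add: mem_tilde_iff_colon[OF assms(1,2,1) order.refl assms(3,4)]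
      mem_ell_iff_colon[OF assms(1,2) order.refl assms(3,4)])

lemma mem_star_f_if_one_mem_colon:
  assumes R: "subring R" and st: "semistar R st" and E: "E \<in> Fbar R"
    and one: "1 \<in> star_f R st J" and J: "J \<subseteq> colon R E y"
  shows "y \<in> star_f R st E"
proof (cases "y = 0")
  case True
  then show ?thesis
    using star_f_incl[OF R st E] submodD(1)[OF Fbar_submod[OF E]] by blast
next
  case False
  have "y \<in> (*) y ` star_f R st J"
    using one by (metis image_eqI mult.right_neutral)
  also have "\<dots> \<subseteq> star_f R st ((*) y ` J)"
    by (rule star_f_scale[OF R st False])
  also have "\<dots> \<subseteq> star_f R st E"
    using J by (intro star_f_mono) (auto simp: colon_def mult.commute)
  finally show ?thesis .
qed

lemma tilde_le_star_f:
  assumes D: "subring D" and Q: "is_quotient_field_of D" and R: "subring R" and DR: "D \<subseteq> R"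
    and st: "semistar R st" and E: "E \<in> Fbar R"
  shows "tilde R st E \<subseteq> star_f R st E"
  using mem_tilde_iff_colon[OF D Q R DR st E] mem_star_f_if_one_mem_colon[OF R st E _ order.refl]
  by (intro subsetI) simp

section \<open>\<open>ell\<close> is a stable semistar operation\<close>

lemma quasi_prime_mult_notin:
  assumes "subring R" "quasi_prime R sf P" "s \<in> R - P" "t \<in> R - P"
  shows "s * t \<in> R - P"
  using assms subringD(4)[OF assms(1)] unfolding quasi_prime_def by blast

lemma mem_ellI:
  "(\<And>P. quasi_prime D (star_f D st) P \<Longrightarrow> \<exists>s\<in>D - P. s * y \<in> E) \<Longrightarrow> y \<in> ell D st E"
  unfolding mem_ell_iff colon_def by blast

lemma mem_ellD:
  "y \<in> ell D st E \<Longrightarrow> quasi_prime D (star_f D st) P \<Longrightarrow> \<exists>s\<in>D - P. s * y \<in> E"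
  unfolding mem_ell_iff colon_def by blast

lemma ell_mono:
  assumes "E \<subseteq> F"
  shows "ell D st E \<subseteq> ell D st F"
proof
  fix y assume y: "y \<in> ell D st E"
  show "y \<in> ell D st F"
    using mem_ellD[OF y] assms by (intro mem_ellI) blast
qed

lemma ell_incl:
  assumes D: "subring D"
  shows "E \<subseteq> ell D st E"
proof
  fix y assume "y \<in> E"
  show "y \<in> ell D st E"
  proof (rule mem_ellI)
    fix P assume "quasi_prime D (star_f D st) P"
    then have "1 \<in> D - P"
      using ideal_of_one_eq subringD(2)[OF D] unfolding quasi_prime_def quasi_ideal_def by blast
    then show "\<exists>s\<in>D - P. s * y \<in> E"
      using \<open>y \<in> E\<close> by (intro bexI[of _ 1]) auto
  qed
qed

lemma ell_idem:
  assumes D: "subring D"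
  shows "ell D st (ell D st E) = ell D st E"
proof
  show "ell D st (ell D st E) \<subseteq> ell D st E"
  proof
    fix y assume y: "y \<in> ell D st (ell D st E)"
    show "y \<in> ell D st E"
    proof (rule mem_ellI)
      fix P assume P: "quasi_prime D (star_f D st) P"
      obtain s where s: "s \<in> D - P" "s * y \<in> ell D st E"
        using mem_ellD[OF y P] by blast
      obtain t where t: "t \<in> D - P" "t * (s * y) \<in> E"
        using mem_ellD[OF s(2) P] by blast
      show "\<exists>s\<in>D - P. s * y \<in> E"
        using quasi_prime_mult_notin[OF D P t(1) s(1)] t(2)
        by (intro bexI[of _ "t * s"]) (auto simp: mult.assoc)
    qed
  qed
qed (rule ell_incl[OF D])

context
  fixes D T :: "'a::field set" and st :: "'a set \<Rightarrow> 'a set"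
  assumes D: "subring D" and DT: "D \<subseteq> T"
begin

lemma ell_Int:
  assumes E: "submod T E" and F: "submod T F"
  shows "ell D st (E \<inter> F) = ell D st E \<inter> ell D st F"
proof
  show "ell D st (E \<inter> F) \<subseteq> ell D st E \<inter> ell D st F"
    using ell_mono by blast
  show "ell D st E \<inter> ell D st F \<subseteq> ell D st (E \<inter> F)"
  proof
    fix y assume y: "y \<in> ell D st E \<inter> ell D st F"
    show "y \<in> ell D st (E \<inter> F)"
    proof (rule mem_ellI)
      fix P assume P: "quasi_prime D (star_f D st) P"
      obtain s where s: "s \<in> D - P" "s * y \<in> E"
        using y mem_ellD[OF _ P] by blast
      obtain t where t: "t \<in> D - P" "t * y \<in> F"
        using y mem_ellD[OF _ P] by blast
      have "t * (s * y) \<in> E" "s * (t * y) \<in> F"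
        using submodD(3)[OF E _ s(2)] submodD(3)[OF F _ t(2)] s(1) t(1) DT by blast+
      then have "(t * s) * y \<in> E \<inter> F"
        by (simp add: algebra_simps)
      then show "\<exists>s\<in>D - P. s * y \<in> E \<inter> F"
        using quasi_prime_mult_notin[OF D P t(1) s(1)] by blast
    qed
  qed
qed

lemma submod_ell:
  assumes E: "submod T E"
  shows "submod T (ell D st E)"
  unfolding submod_def
proof (intro conjI ballI)
  show "0 \<in> ell D st E"
    using ell_incl[OF D] submodD(1)[OF E] by blast
next
  fix x y assume x: "x \<in> ell D st E" and y: "y \<in> ell D st E"
  show "x + y \<in> ell D st E"
  proof (rule mem_ellI)
    fix P assume P: "quasi_prime D (star_f D st) P"
    obtain s where s: "s \<in> D - P" "s * x \<in> E"
      using mem_ellD[OF x P] by blast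
    obtain t where t: "t \<in> D - P" "t * y \<in> E"
      using mem_ellD[OF y P] by blast
    have "t * (s * x) \<in> E" "s * (t * y) \<in> E"
      using submodD(3)[OF E _ s(2)] submodD(3)[OF E _ t(2)] s(1) t(1) DT by blast+
    then have "(t * s) * (x + y) \<in> E"
      using submodD(2)[OF E] by (simp add: algebra_simps)
    then show "\<exists>s\<in>D - P. s * (x + y) \<in> E"
      using quasi_prime_mult_notin[OF D P t(1) s(1)] by blast
  qed
next
  fix r x assume r: "r \<in> T" and x: "x \<in> ell D st E"
  show "r * x \<in> ell D st E"
  proof (rule mem_ellI)
    fix P assume P: "quasi_prime D (star_f D st) P"
    obtain s where s: "s \<in> D - P" "s * x \<in> E"
      using mem_ellD[OF x P] by blast
    then have "s * (r * x) \<in> E"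
      using submodD(3)[OF E r s(2)] by (simp add: algebra_simps)
    then show "\<exists>s\<in>D - P. s * (r * x) \<in> E"
      using s(1) by blast
  qed
qed

end

lemma ell_scale:
  assumes x: "x \<noteq> 0"
  shows "ell D st ((*) x ` E) = (*) x ` ell D st E"
proof -
  have scaled_iff: "z \<in> (*) x ` A \<longleftrightarrow> z / x \<in> A" for z A
  proof
    assume "z \<in> (*) x ` A"
    then show "z / x \<in> A"
      using x by auto
  next
    assume "z / x \<in> A"
    then show "z \<in> (*) x ` A"
      using x by (intro image_eqI[of _ _ "z / x"]) auto
  qed
  have "y \<in> ell D st ((*) x ` E) \<longleftrightarrow> y / x \<in> ell D st E" for y
    unfolding mem_ell_iff colon_def scaled_iff by simp
  then show ?thesis
    by (intro set_eqI) (simp add: scaled_iff)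
qed

lemma semistar_ell:
  assumes D: "subring D" and DT: "D \<subseteq> T"
  shows "semistar T (ell D st)"
  unfolding semistar_def
proof (intro ballI conjI allI impI)
  fix E assume E: "E \<in> Fbar T"
  show "ell D st E \<in> Fbar T"
    using submod_ell[OF D DT Fbar_submod[OF E]] ell_incl[OF D, of E st] E
      submodD(1)[OF Fbar_submod[OF E]]
    unfolding Fbar_def by auto
  show "E \<subseteq> ell D st E"
    by (rule ell_incl[OF D])
  show "ell D st (ell D st E) = ell D st E"
    by (rule ell_idem[OF D])
  show "ell D st ((*) x ` E) = (*) x ` ell D st E" if "x \<noteq> 0" for x
    by (rule ell_scale[OF that])
  show "ell D st E \<subseteq> ell D st F" if "E \<subseteq> F" for F
    by (rule ell_mono[OF that])
qed

lemma stable_ell: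
  assumes D: "subring D" and DT: "D \<subseteq> T"
  shows "stable T (ell D st)"
  unfolding stable_def by (simp add: ell_Int[OF D DT] Fbar_submod)

section \<open>Linkedness\<close>

lemma semistar_eq_iff_one_mem:
  assumes R: "subring R" and st: "semistar R st" and G: "G \<in> Fbar R" "G \<subseteq> R"
  shows "st G = st R \<longleftrightarrow> 1 \<in> st G"
proof
  assume "st G = st R"
  then show "1 \<in> st G"
    using semistarD(4)[OF st subring_Fbar[OF R]] subringD(2)[OF R] by blast
next
  assume one: "1 \<in> st G"
  show "st G = st R"
  proof
    show "st G \<subseteq> st R"
      using semistarD(3)[OF st G(1) subring_Fbar[OF R]] G(2) .
    have "R \<subseteq> st G"
      using submodD(3)[OF Fbar_submod[OF semistarD(1)[OF st G(1)]] _ one] by force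
    then have "st R \<subseteq> st (st G)"
      using semistarD(3)[OF st subring_Fbar[OF R] semistarD(1)[OF st G(1)]] by blast
    then show "st R \<subseteq> st G"
      using semistarD(5)[OF st G(1)] by simp
  qed
qed

lemma mod_gen_extension:
  assumes D: "subring D" and T: "subring T" and DT: "D \<subseteq> T" and F: "F \<in> fgF D" "F \<subseteq> D"
  shows "mod_gen T F \<in> Fbar T" "mod_gen T F \<subseteq> T"
proof -
  show "mod_gen T F \<in> Fbar T"
    by (rule fgF_Fbar[OF T fgF_extend[OF D T DT F(1)]])
  show "mod_gen T F \<subseteq> T"
    using F(2) DT by (intro mod_gen_least[OF subring_submod[OF T]]) blast
qed

lemma linked_iff_one_mem:
  assumes D: "subring D" and T: "subring T" and DT: "D \<subseteq> T"
    and st: "semistar D st" and st': "semistar T st'"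
  shows "linked D T st st' \<longleftrightarrow> (\<forall>F. F \<in> fgF D \<and> F \<subseteq> D \<and> 1 \<in> st F \<longrightarrow> 1 \<in> st' (mod_gen T F))"
  unfolding linked_def
proof (intro iff_allI)
  fix F
  show "(F \<in> fgF D \<and> F \<subseteq> D \<and> st F = st D \<longrightarrow> st' (mod_gen T F) = st' T) \<longleftrightarrow>
      (F \<in> fgF D \<and> F \<subseteq> D \<and> 1 \<in> st F \<longrightarrow> 1 \<in> st' (mod_gen T F))"
  proof (cases "F \<in> fgF D \<and> F \<subseteq> D")
    case True
    then show ?thesis
      using semistar_eq_iff_one_mem[OF D st fgF_Fbar[OF D]]
        semistar_eq_iff_one_mem[OF T st' mod_gen_extension[OF D T DT]] by simp
  qed auto
qed

context
  fixes D T :: "'a::field set" and st :: "'a set \<Rightarrow> 'a set"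
  assumes D: "subring D" and Q: "is_quotient_field_of D" and T: "subring T" and DT: "D \<subseteq> T"
    and st: "semistar D st"
begin

lemma one_mem_ell_extension:
  assumes F: "F \<in> fgF D" "F \<subseteq> D" "1 \<in> st F"
  shows "1 \<in> ell D st (mod_gen T F)"
proof -
  have "F \<subseteq> colon D (mod_gen T F) 1"
    using F(2) mod_gen_base[OF T, of F] unfolding colon_def by auto
  then have "1 \<in> star_f D st (colon D (mod_gen T F) 1)"
    using star_f_fgF[OF F(1)] F(3) by blast
  then show ?thesis
    using mem_ell_iff_colon[OF D Q DT st mod_gen_extension(1)[OF D T DT F(1,2)]] by simp
qed

lemma linked_ell: "linked D T st (ell D st)"
  unfolding linked_iff_one_mem[OF D T DT st semistar_ell[OF D DT]]
  using one_mem_ell_extension by blast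

lemma ell_le_tilde:
  assumes st': "semistar T st'" and linked: "linked D T st st'" and E: "E \<in> Fbar T"
  shows "ell D st E \<subseteq> tilde T st' E"
proof
  fix y assume "y \<in> ell D st E"
  then obtain G where G: "G \<in> fgF D" "G \<subseteq> colon D E y" "1 \<in> st G"
    using mem_ell_iff_colon[OF D Q DT st E] unfolding mem_star_f_iff by blast
  have "G \<subseteq> D"
    using G(2) unfolding colon_def by blast
  then have "1 \<in> st' (mod_gen T G)"
    using linked G(1,3) unfolding linked_iff_one_mem[OF D T DT st st'] by blast
  moreover have "mod_gen T G \<subseteq> colon T E y"
  proof (rule mod_gen_least)
    show "submod T (colon T E y)"
      using ideal_of_colon[OF T order.refl Fbar_submod[OF E]] unfolding ideal_of_def by blast
    show "G \<subseteq> colon T E y"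
      using G(2) DT unfolding colon_def by blast
  qed
  ultimately have "1 \<in> star_f T st' (colon T E y)"
    using star_f_fgF[OF fgF_extend[OF D T DT G(1)]] by blast
  then show "y \<in> tilde T st' E"
    using mem_tilde_iff_colon[OF D Q T DT st' E] by simp
qed

lemma star_f_ell_eq:
  assumes E: "E \<in> Fbar T"
  shows "star_f T (ell D st) E = ell D st E"
proof
  show "star_f T (ell D st) E \<subseteq> ell D st E"
    by (rule star_f_le[OF T semistar_ell[OF D DT] E])
  show "ell D st E \<subseteq> star_f T (ell D st) E"
  proof
    fix y assume y: "y \<in> ell D st E"
    show "y \<in> star_f T (ell D st) E"
    proof (cases "y = 0")
      case True
      then show ?thesis
        using star_f_incl[OF T semistar_ell[OF D DT] E] submodD(1)[OF Fbar_submod[OF E]] by blast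
    next
      case False
      obtain G where G: "G \<in> fgF D" "G \<subseteq> colon D E y" "1 \<in> st G"
        using y mem_ell_iff_colon[OF D Q DT st E] unfolding mem_star_f_iff by blast
      define F where "F = mod_gen T ((*) y ` G)"
      have F: "F \<in> fgF T"
        unfolding F_def by (rule fgF_extend[OF D T DT fgF_scale[OF D False G(1)]])
      have "F \<subseteq> E"
        unfolding F_def using G(2)
        by (intro mod_gen_least[OF Fbar_submod[OF E]]) (auto simp: colon_def mult.commute)
      moreover have "G \<subseteq> colon D F y"
        using G(2) mod_gen_base[OF T, of "(*) y ` G"] unfolding F_def colon_def
        by (auto simp: mult.commute)
      then have "1 \<in> star_f D st (colon D F y)"
        using star_f_fgF[OF G(1)] G(3) by blast
      then have "y \<in> ell D st F"
        using mem_ell_iff_colon[OF D Q DT st fgF_Fbar[OF T F]] by simp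
      ultimately show ?thesis
        unfolding mem_star_f_iff using F by blast
    qed
  qed
qed

lemma tilde_ell_eq:
  assumes E: "E \<in> Fbar T"
  shows "tilde T (ell D st) E = ell D st E"
proof (rule set_eqI)
  fix y
  have C: "colon T E y \<in> Fbar T"
    using ideal_of_colon[OF T order.refl Fbar_submod[OF E]] colon_ne_zero[OF D Q DT DT E]
    unfolding ideal_of_def Fbar_def by blast
  have "colon D (colon T E y) 1 = colon D E y"
    using DT unfolding colon_def by auto
  then have "y \<in> tilde T (ell D st) E \<longleftrightarrow> 1 \<in> star_f D st (colon D E y)"
    by (simp add: mem_tilde_iff_colon[OF D Q T DT semistar_ell[OF D DT] E] star_f_ell_eq[OF C]
        mem_ell_iff_colon[OF D Q DT st C])
  then show "y \<in> tilde T (ell D st) E \<longleftrightarrow> y \<in> ell D st E"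
    by (simp add: mem_ell_iff_colon[OF D Q DT st E])
qed

lemma linked_iff_ell_le_star_f:
  assumes st': "semistar T st'"
  shows "linked D T st st' \<longleftrightarrow> sle T (ell D st) (star_f T st')"
proof
  assume "linked D T st st'"
  then show "sle T (ell D st) (star_f T st')"
    unfolding sle_def using ell_le_tilde[OF st'] tilde_le_star_f[OF D Q T DT st'] by blast
next
  assume le: "sle T (ell D st) (star_f T st')"
  show "linked D T st st'"
    unfolding linked_iff_one_mem[OF D T DT st st']
  proof (intro allI impI)
    fix F assume F: "F \<in> fgF D \<and> F \<subseteq> D \<and> 1 \<in> st F"
    then have "mod_gen T F \<in> Fbar T" "1 \<in> ell D st (mod_gen T F)"
      using mod_gen_extension[OF D T DT] one_mem_ell_extension by blast+
    then show "1 \<in> st' (mod_gen T F)"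
      using le star_f_le[OF T st'] unfolding sle_def by blast
  qed
qed

lemma linked_iff_linked_ell:
  assumes st': "semistar T st'"
  shows "linked D T st st' \<longleftrightarrow> linked T T (ell D st) st'"
  unfolding linked_iff_one_mem[OF T T order.refl semistar_ell[OF D DT] st']
proof
  assume "linked D T st st'"
  then have le: "sle T (ell D st) (star_f T st')"
    using linked_iff_ell_le_star_f[OF st'] by blast
  show "\<forall>F. F \<in> fgF T \<and> F \<subseteq> T \<and> 1 \<in> ell D st F \<longrightarrow> 1 \<in> st' (mod_gen T F)"
  proof (intro allI impI)
    fix F assume F: "F \<in> fgF T \<and> F \<subseteq> T \<and> 1 \<in> ell D st F"
    then have FT: "F \<in> Fbar T"
      using fgF_Fbar[OF T] by blast
    then have "1 \<in> star_f T st' F"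
      using F le unfolding sle_def by blast
    then show "1 \<in> st' (mod_gen T F)"
      using star_f_le[OF T st' FT] mod_gen_eq_self[OF T Fbar_submod[OF FT]] by auto
  qed
next
  assume linked: "\<forall>F. F \<in> fgF T \<and> F \<subseteq> T \<and> 1 \<in> ell D st F \<longrightarrow> 1 \<in> st' (mod_gen T F)"
  show "linked D T st st'"
    unfolding linked_iff_one_mem[OF D T DT st st']
  proof (intro allI impI)
    fix F assume F: "F \<in> fgF D \<and> F \<subseteq> D \<and> 1 \<in> st F"
    then have "mod_gen T F \<in> fgF T" "mod_gen T F \<subseteq> T" "1 \<in> ell D st (mod_gen T F)"
      using fgF_extend[OF D T DT] mod_gen_extension(2)[OF D T DT] one_mem_ell_extension by blast+
    then have "1 \<in> st' (mod_gen T (mod_gen T F))"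
      using linked by blast
    then show "1 \<in> st' (mod_gen T F)"
      using mod_gen_eq_self[OF T submod_mod_gen[OF T]] by simp
  qed
qed


lemma star_f_eq_ell_if_le:
  assumes a: "semistar T a" "linked D T st a" and le: "sle T (star_f T a) (ell D st)"
  shows "\<forall>E\<in>Fbar T. star_f T a E = ell D st E"
  using linked_iff_ell_le_star_f[OF a(1)] a(2) le unfolding sle_def by blast

lemma star_f_eq_ell_if_minimal:
  assumes a: "semistar T a" "linked D T st a"
    and minimal: "\<forall>b. semistar T b \<and> linked D T st b \<and> sle T (star_f T b) (star_f T a)
      \<longrightarrow> (\<forall>E\<in>Fbar T. star_f T b E = star_f T a E)"
  shows "\<forall>E\<in>Fbar T. star_f T a E = ell D st E"
proof -
  have "sle T (star_f T (ell D st)) (star_f T a)"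
    using linked_iff_ell_le_star_f[OF a(1)] a(2) star_f_ell_eq unfolding sle_def by simp
  then show ?thesis
    using minimal semistar_ell[OF D DT] linked_ell star_f_ell_eq by auto
qed
end

lemma linked_tilde:
  assumes D: "subring D" and Q: "is_quotient_field_of D" and st: "semistar D st"
  shows "linked D D st (tilde D st)"
  unfolding linked_def
proof (intro allI impI)
  fix F assume F: "F \<in> fgF D \<and> F \<subseteq> D \<and> st F = st D"
  then have "ell D st (mod_gen D F) = ell D st D"
    using linked_ell[OF D Q D order.refl st] unfolding linked_def by blast
  moreover have "mod_gen D F \<in> Fbar D"
    using F mod_gen_extension(1)[OF D D order.refl] by blast
  ultimately show "tilde D st (mod_gen D F) = tilde D st D"
    using tilde_eq_ell[OF D Q st] subring_Fbar[OF D] by simp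
qed

theorem proposition3p12:
  fixes D T :: "'a::field set" and st st' :: "'a set \<Rightarrow> 'a set"
  assumes "subring D" and "is_quotient_field_of D"
    and "subring T" and "D \<subseteq> T"
    and "semistar D st" and "semistar T st'"
  shows
    "(semistar T (ell D st) \<and> stable T (ell D st))
   \<and> (linked D T st st' \<longrightarrow>
        sle T (ell D st) (tilde T st') \<and> sle T (tilde T st') (star_f T st')
        \<and> linked T T (ell D st) st')
   \<and> (linked D T st (ell D st) \<and> linked D D st (tilde D st))
   \<and> (finite_type T (ell D st) \<and> (\<forall>E\<in>Fbar T. tilde T (ell D st) E = ell D st E))
   \<and> ((\<exists>a. semistar T a \<and> linked D T st a \<and> (\<forall>E\<in>Fbar T. star_f T a E = ell D st E))
      \<and> (\<forall>a. semistar T a \<and> linked D T st a \<and> sle T (star_f T a) (ell D st)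
             \<longrightarrow> (\<forall>E\<in>Fbar T. star_f T a E = ell D st E))
      \<and> (\<forall>a. semistar T a \<and> linked D T st a
             \<and> (\<forall>b. semistar T b \<and> linked D T st b \<and> sle T (star_f T b) (star_f T a)
                    \<longrightarrow> (\<forall>E\<in>Fbar T. star_f T b E = star_f T a E))
             \<longrightarrow> (\<forall>E\<in>Fbar T. star_f T a E = ell D st E)))
   \<and> (linked D T st st' \<longleftrightarrow> linked T T (ell D st) st')
   \<and> (linked D T st st' \<longleftrightarrow> sle T (ell D st) (star_f T st'))"
proof -
  note setting = assms(1-5)
  have part1: "semistar T (ell D st) \<and> stable T (ell D st)"
    using semistar_ell[OF assms(1,4)] stable_ell[OF assms(1,4)] by blast
  have part2: "linked D T st st' \<longrightarrow> sle T (ell D st) (tilde T st')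
      \<and> sle T (tilde T st') (star_f T st') \<and> linked T T (ell D st) st'"
    using ell_le_tilde[OF setting assms(6)] tilde_le_star_f[OF assms(1,2,3,4,6)]
      linked_iff_linked_ell[OF setting assms(6)]
    unfolding sle_def by blast
  have part4: "finite_type T (ell D st) \<and> (\<forall>E\<in>Fbar T. tilde T (ell D st) E = ell D st E)"
    using star_f_ell_eq[OF setting] tilde_ell_eq[OF setting] unfolding finite_type_def by simp
  show ?thesis
    using part1 part2 linked_ell[OF setting] linked_tilde[OF assms(1,2,5)] part4
      semistar_ell[OF assms(1,4)] star_f_ell_eq[OF setting]
      star_f_eq_ell_if_le[OF setting] star_f_eq_ell_if_minimal[OF setting]
      linked_iff_linked_ell[OF setting assms(6)] linked_iff_ell_le_star_f[OF setting assms(6)]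
    by blast
qed

end
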